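(* Let $X\in\mathbb{R}^{n\times p}$, $B^*\in\mathbb{R}^{p\times q}$, $E\in\mathbb{R}^{n\times q}$ and $Y=XB^*+E$. Let $f:\mathbb{R}^{n\times q}\to\mathbb{R}$ be a convex function, $\lambda>0$, and let $\hat B$ be a minimizer over $B\in\mathbb{R}^{p\times q}$ of $f(Y-XB)+\lambda\|B\|_{2,1}$. Let $\Delta=\hat B-B^*$ and $\mathcal S^*=\{j\in[p]:\|B^*_{j:}\|_2\ne0\}$. Assume there exists $Z\in\partial f(E)$ with $\|X^\top Z\|_{2,\infty}\le\lambda/2$. Then: (i) $\|\Delta_{\mathcal S^{*c}}\|_{2,1}\le3\|\Delta_{\mathcal S^*}\|_{2,1}$; (ii) if moreover $\Psi=\frac1nX^\top X$ satisfies $\Psi_{jj}=1$ and $\max_{j'\ne j}|\Psi_{jj'}|\le\frac{1}{7\alpha s}$ for all $j\in[p]$, for some integer $s\ge1$ with $|\mathcal S^*|\le s$ and some $\alpha>1$, then $$\|\Delta\|_{2,\infty}\le\Big(1+\frac{16}{7(\alpha-1)}\Big)\|\Psi\Delta\|_{2,\infty}.$$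
   Context: $M_{j:}$ is the $j$-th row of $M$; $\|M\|_{2,1}=\sum_j\|M_{j:}\|_2$, $\|M\|_{2,\infty}=\max_j\|M_{j:}\|_2$. For $\mathcal S\subset[p]$, $M_{\mathcal S}$ denotes the matrix equal to $M$ on the rows indexed by $\mathcal S$ and zero on the other rows; $\mathcal S^{*c}=[p]\setminus\mathcal S^*$. $\partial f$ is the convex subdifferential, with the inner product $\langle A,B\rangle=\operatorname{Tr}(A^\top B)$. *)

theory Defs
  imports "HOL-Analysis.Analysis"
begin

text \<open>Matrices are type-indexed: a real n x p matrix is \<open>real^'p^'n\<close>;
  row j of M is \<open>M $ j\<close>, and \<open>norm (M $ j)\<close> is its Euclidean norm.\<close>

definition norm21 :: "real^'c^'r \<Rightarrow> real" where
  "norm21 M = (\<Sum>j\<in>UNIV. norm (M $ j))"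

definition norm2inf :: "real^'c^'r \<Rightarrow> real" where
  "norm2inf M = Max (range (\<lambda>j. norm (M $ j)))"

definition restrict_rows :: "'r set \<Rightarrow> real^'c^'r \<Rightarrow> real^'c^'r" where
  "restrict_rows S M = (\<chi> j. if j \<in> S then M $ j else 0)"

definition frob_inner :: "real^'c^'r \<Rightarrow> real^'c^'r \<Rightarrow> real" where
  "frob_inner A B = (\<Sum>i\<in>UNIV. \<Sum>k\<in>UNIV. A $ i $ k * B $ i $ k)"

definition subdiff :: "(real^'c^'r \<Rightarrow> real) \<Rightarrow> real^'c^'r \<Rightarrow> (real^'c^'r) set" where
  "subdiff f E = {Z. \<forall>W. f W \<ge> f E + frob_inner Z (W - E)}"

definition row_support :: "real^'c^'r \<Rightarrow> 'r set" where
  "row_support M = {j. norm (M $ j) \<noteq> 0}"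

end

theory Submission
  imports Defs
begin

text \<open>Write \<open>D = Bhat - Bstar\<close>, \<open>S = row_support Bstar\<close> and \<open>D\<^sub>S\<close>, \<open>D\<^sub>S\<^sub>c\<close> for the
  restrictions of \<open>D\<close> to \<open>S\<close> and \<open>- S\<close>. Comparing the objective at \<open>Bhat\<close> and at \<open>Bstar\<close>,
  and bounding \<open>f (E - X D)\<close> from below with the subgradient \<open>Z\<close>, gives
  \<open>\<lambda> (norm21 Bhat - norm21 Bstar) \<le> \<langle>X\<^sup>T Z, D\<rangle> \<le> \<lambda>/2 norm21 D\<close>; decomposability of the
  group norm gives \<open>norm21 Bhat - norm21 Bstar \<ge> norm21 D\<^sub>S\<^sub>c - norm21 D\<^sub>S\<close>, and the two
  together yield the cone condition (i). By (i), \<open>norm21 D \<le> 4 norm21 D\<^sub>S \<le> 4 s norm2inf D\<close>.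
  Splitting off the unit diagonal of \<open>\<Psi>\<close>, every row satisfies
  \<open>norm D\<^sub>j \<le> norm2inf (\<Psi> D) + norm21 D / (7 \<alpha> s)\<close>, hence
  \<open>(1 - 4/(7\<alpha>)) norm2inf D \<le> norm2inf (\<Psi> D)\<close>, and (ii) follows from
  \<open>(1 + 16/(7(\<alpha> - 1))) (1 - 4/(7\<alpha>)) \<ge> 1\<close>.\<close>

lemma restrict_rows_nth [simp]: "restrict_rows S M $ j = (if j \<in> S then M $ j else 0)"
  by (simp add: restrict_rows_def)

lemma norm_row_le_norm2inf: "norm (M $ j) \<le> norm2inf M"
  unfolding norm2inf_def by (rule Max_ge) auto

lemma norm2inf_attained: "\<exists>j. norm2inf M = norm (M $ j)"
proof -
  have "norm2inf M \<in> range (\<lambda>j. norm (M $ j))"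
    unfolding norm2inf_def by (rule Max_in) auto
  then show ?thesis by auto
qed

lemma norm2inf_nonneg: "0 \<le> norm2inf M"
  using norm_ge_zero norm_row_le_norm2inf by (rule order_trans)

lemma norm21_nonneg: "0 \<le> norm21 M"
  unfolding norm21_def by (simp add: sum_nonneg)

lemma frob_inner_eq_trace: "frob_inner A B = trace (transpose A ** B)"
  unfolding frob_inner_def trace_def matrix_matrix_mult_def transpose_def
  by simp (rule sum.swap)

lemma frob_inner_transpose_mult: "frob_inner (transpose X ** Z) D = frob_inner Z (X ** D)"
  by (simp add: frob_inner_eq_trace matrix_transpose_mul matrix_mul_assoc)

lemma frob_inner_eq_inner: "frob_inner A B = inner A B"
  by (simp add: frob_inner_def inner_vec_def)

lemma frob_inner_le_norm2inf_mult_norm21: "frob_inner A B \<le> norm2inf A * norm21 B"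
proof -
  have "frob_inner A B = (\<Sum>i\<in>UNIV. inner (A $ i) (B $ i))"
    by (simp add: frob_inner_eq_inner inner_vec_def)
  also have "\<dots> \<le> (\<Sum>i\<in>UNIV. norm2inf A * norm (B $ i))"
  proof (rule sum_mono)
    fix i
    have "inner (A $ i) (B $ i) \<le> norm (A $ i) * norm (B $ i)"
      by (rule norm_cauchy_schwarz)
    also have "\<dots> \<le> norm2inf A * norm (B $ i)"
      by (simp add: mult_right_mono norm_row_le_norm2inf)
    finally show "inner (A $ i) (B $ i) \<le> norm2inf A * norm (B $ i)" .
  qed
  also have "\<dots> = norm2inf A * norm21 B"
    by (simp add: norm21_def sum_distrib_left)
  finally show ?thesis .
qed

lemma norm21_restrict_rows_split:
  "norm21 D = norm21 (restrict_rows S D) + norm21 (restrict_rows (- S) D)"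
  unfolding norm21_def sum.distrib[symmetric] by (rule sum.cong) auto

lemma norm21_restrict_rows_le_card: "norm21 (restrict_rows S D) \<le> real (card S) * norm2inf D"
proof -
  have "norm21 (restrict_rows S D) = (\<Sum>j\<in>S. norm (D $ j))"
    by (simp add: norm21_def if_distrib sum.If_cases)
  also have "\<dots> \<le> (\<Sum>j\<in>S. norm2inf D)"
    by (rule sum_mono) (rule norm_row_le_norm2inf)
  finally show ?thesis by simp
qed

lemma norm21_diff_ge_restrict_rows:
  assumes "row_support B \<subseteq> S"
  shows "norm21 (restrict_rows (- S) (B' - B)) - norm21 (restrict_rows S (B' - B))
           \<le> norm21 B' - norm21 B"
proof -
  have "norm (restrict_rows (- S) (B' - B) $ j) - norm (restrict_rows S (B' - B) $ j)
          \<le> norm (B' $ j) - norm (B $ j)" for j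
  proof (cases "j \<in> S")
    case True
    then show ?thesis
      using norm_triangle_ineq2[of "B $ j" "B' $ j"] by (simp add: norm_minus_commute)
  next
    case False
    with assms have "B $ j = 0" by (auto simp: row_support_def)
    with False show ?thesis by simp
  qed
  then show ?thesis
    unfolding norm21_def by (simp add: sum_subtractf[symmetric] sum_mono)
qed

lemma cone_condition_of_basic_inequality:
  fixes X :: "real^'p^'n" and B D :: "real^'q^'p" and E :: "real^'q^'n"
  assumes lam_pos: "lam > 0"
    and Z_subgrad: "Z \<in> subdiff f E"
    and Z_bound: "norm2inf (transpose X ** Z) \<le> lam / 2"
    and basic: "f (E - X ** D) + lam * norm21 (B + D) \<le> f E + lam * norm21 B"
    and support: "row_support B \<subseteq> S"
  shows "norm21 (restrict_rows (- S) D) \<le> 3 * norm21 (restrict_rows S D)"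
proof -
  have "f E + frob_inner Z ((E - X ** D) - E) \<le> f (E - X ** D)"
    using Z_subgrad unfolding subdiff_def by blast
  then have "f E - frob_inner (transpose X ** Z) D \<le> f (E - X ** D)"
    unfolding frob_inner_transpose_mult by (simp add: frob_inner_eq_inner)
  moreover have "frob_inner (transpose X ** Z) D \<le> lam / 2 * norm21 D"
    using frob_inner_le_norm2inf_mult_norm21 mult_right_mono[OF Z_bound norm21_nonneg]
    by (rule order_trans)
  moreover have "lam * (norm21 (restrict_rows (- S) D) - norm21 (restrict_rows S D))
                   \<le> lam * (norm21 (B + D) - norm21 B)"
    using norm21_diff_ge_restrict_rows[OF support, of "B + D"] lam_pos by simp
  ultimately have "lam * (norm21 (restrict_rows (- S) D) - norm21 (restrict_rows S D))
                     \<le> lam / 2 * (norm21 (restrict_rows S D) + norm21 (restrict_rows (- S) D))"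
    using basic norm21_restrict_rows_split[of D S] by (simp add: algebra_simps)
  then have "lam * (norm21 (restrict_rows (- S) D) - 3 * norm21 (restrict_rows S D)) \<le> 0"
    by (simp add: algebra_simps)
  with lam_pos show ?thesis by (simp add: mult_le_0_iff)
qed

lemma norm21_le_of_cone_condition:
  assumes "norm21 (restrict_rows (- S) D) \<le> 3 * norm21 (restrict_rows S D)"
    and "card S \<le> s"
  shows "norm21 D \<le> 4 * real s * norm2inf D"
proof -
  have "norm21 D \<le> 4 * norm21 (restrict_rows S D)"
    using assms(1) norm21_restrict_rows_split[of D S] by simp
  also have "\<dots> \<le> 4 * (real (card S) * norm2inf D)"
    using norm21_restrict_rows_le_card by simp
  also have "\<dots> \<le> 4 * (real s * norm2inf D)"
    using assms(2) by (simp add: mult_right_mono norm2inf_nonneg)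
  finally show ?thesis by simp
qed

text \<open>Since \<open>\<Psi>\<^sub>j\<^sub>j = 1\<close>, row \<open>j\<close> of \<open>D\<close> is row \<open>j\<close> of \<open>\<Psi>D\<close> minus the off-diagonal contributions.\<close>
lemma norm_row_le_mutual_incoherence:
  fixes Psi :: "real^'p^'p" and D :: "real^'q^'p"
  assumes diag: "Psi $ j $ j = 1"
    and off_diag: "\<forall>j'. j' \<noteq> j \<longrightarrow> \<bar>Psi $ j $ j'\<bar> \<le> c"
    and "0 \<le> c"
  shows "norm (D $ j) \<le> norm2inf (Psi ** D) + c * norm21 D"
proof -
  define R where "R = (\<Sum>j'\<in>UNIV - {j}. Psi $ j $ j' *\<^sub>R D $ j')"
  have "(Psi ** D) $ j = (\<Sum>j'\<in>UNIV. Psi $ j $ j' *\<^sub>R D $ j')"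
    by (simp add: vec_eq_iff matrix_matrix_mult_def)
  also have "\<dots> = D $ j + R"
    unfolding R_def by (subst sum.remove[of UNIV j]) (auto simp: diag)
  finally have "norm (D $ j) \<le> norm ((Psi ** D) $ j) + norm R"
    by (metis add_diff_cancel_right' norm_triangle_ineq4)
  moreover have "norm R \<le> (\<Sum>j'\<in>UNIV - {j}. c * norm (D $ j'))"
    unfolding R_def
    by (rule order_trans[OF norm_sum], rule sum_mono)
       (use off_diag in \<open>auto intro: mult_right_mono\<close>)
  moreover have "(\<Sum>j'\<in>UNIV - {j}. c * norm (D $ j')) \<le> c * norm21 D"
    unfolding norm21_def sum_distrib_left
    by (rule sum_mono2) (use \<open>0 \<le> c\<close> in auto)
  ultimately show ?thesis
    using norm_row_le_norm2inf[of "Psi ** D" j] by linarith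
qed

lemma norm2inf_le_mutual_incoherence:
  fixes Psi :: "real^'p^'p" and D :: "real^'q^'p"
  assumes diag: "\<forall>j. Psi $ j $ j = 1"
    and off_diag: "\<forall>j j'. j' \<noteq> j \<longrightarrow> \<bar>Psi $ j $ j'\<bar> \<le> c"
    and "0 \<le> c"
    and norm21_le: "norm21 D \<le> k * norm2inf D"
  shows "(1 - c * k) * norm2inf D \<le> norm2inf (Psi ** D)"
proof -
  obtain j where j: "norm2inf D = norm (D $ j)"
    using norm2inf_attained by blast
  have "norm2inf D \<le> norm2inf (Psi ** D) + c * norm21 D"
    unfolding j using assms by (intro norm_row_le_mutual_incoherence) auto
  also have "\<dots> \<le> norm2inf (Psi ** D) + c * (k * norm2inf D)"
    using norm21_le \<open>0 \<le> c\<close> by (simp add: mult_left_mono)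
  finally show ?thesis by (simp add: algebra_simps)
qed

lemma norm2inf_le_of_cone_condition:
  fixes Psi :: "real^'p^'p" and D :: "real^'q^'p" and \<alpha> :: real
  assumes cone: "norm21 (restrict_rows (- S) D) \<le> 3 * norm21 (restrict_rows S D)"
    and "card S \<le> s" and "s \<ge> 1" and "\<alpha> > 1"
    and diag: "\<forall>j. Psi $ j $ j = 1"
    and off_diag: "\<forall>j j'. j' \<noteq> j \<longrightarrow> \<bar>Psi $ j $ j'\<bar> \<le> 1 / (7 * \<alpha> * real s)"
  shows "norm2inf D \<le> (1 + 16 / (7 * (\<alpha> - 1))) * norm2inf (Psi ** D)"
proof -
  have "(1 - 1 / (7 * \<alpha> * real s) * (4 * real s)) * norm2inf D \<le> norm2inf (Psi ** D)"
    using assms norm21_le_of_cone_condition[OF cone]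
    by (intro norm2inf_le_mutual_incoherence) auto
  moreover have "1 / (7 * \<alpha> * real s) * (4 * real s) = 4 / (7 * \<alpha>)"
    using \<open>s \<ge> 1\<close> by simp
  ultimately have contraction: "(1 - 4 / (7 * \<alpha>)) * norm2inf D \<le> norm2inf (Psi ** D)"
    by simp
  have "1 \<le> (1 + 16 / (7 * (\<alpha> - 1))) * (1 - 4 / (7 * \<alpha>))"
    using \<open>\<alpha> > 1\<close> by (simp add: field_simps)
  then have "norm2inf D \<le> (1 + 16 / (7 * (\<alpha> - 1))) * ((1 - 4 / (7 * \<alpha>)) * norm2inf D)"
    using mult_right_mono[OF _ norm2inf_nonneg] by (fastforce simp: mult.assoc)
  also have "\<dots> \<le> (1 + 16 / (7 * (\<alpha> - 1))) * norm2inf (Psi ** D)"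
    using contraction \<open>\<alpha> > 1\<close> by (simp add: mult_left_mono)
  finally show ?thesis .
qed

theorem lemma2:
  fixes X :: "real^'p^'n" and Bstar Bhat :: "real^'q^'p" and E Y :: "real^'q^'n"
    and f :: "real^'q^'n \<Rightarrow> real" and lam :: real
  assumes Y_def: "Y = X ** Bstar + E"
    and f_convex: "convex_on UNIV f"
    and lam_pos: "lam > 0"
    and Bhat_min: "\<forall>B. f (Y - X ** Bhat) + lam * norm21 Bhat \<le> f (Y - X ** B) + lam * norm21 B"
    and Z_ex: "\<exists>Z \<in> subdiff f E. norm2inf (transpose X ** Z) \<le> lam / 2"
  shows "norm21 (restrict_rows (- row_support Bstar) (Bhat - Bstar))
           \<le> 3 * norm21 (restrict_rows (row_support Bstar) (Bhat - Bstar))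
       \<and> (\<forall>(s::nat) (\<alpha>::real).
            let Psi = (1 / real CARD('n)) *\<^sub>R (transpose X ** X) in
            s \<ge> 1 \<and> card (row_support Bstar) \<le> s \<and> \<alpha> > 1
            \<and> (\<forall>j. Psi $ j $ j = 1)
            \<and> (\<forall>j j'. j' \<noteq> j \<longrightarrow> \<bar>Psi $ j $ j'\<bar> \<le> 1 / (7 * \<alpha> * real s))
            \<longrightarrow> norm2inf (Bhat - Bstar)
                \<le> (1 + 16 / (7 * (\<alpha> - 1))) * norm2inf (Psi ** (Bhat - Bstar)))"
proof -
  obtain Z where Z: "Z \<in> subdiff f E" "norm2inf (transpose X ** Z) \<le> lam / 2"
    using Z_ex by blast
  define D where "D = Bhat - Bstar"
  have Bhat_eq: "Bhat = Bstar + D"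
    by (simp add: D_def)
  have "f (E - X ** D) + lam * norm21 (Bstar + D) \<le> f E + lam * norm21 Bstar"
    using Bhat_min[rule_format, of Bstar]
    by (simp add: Y_def Bhat_eq matrix_add_ldistrib)
  from cone_condition_of_basic_inequality[OF lam_pos Z this]
  have cone: "norm21 (restrict_rows (- row_support Bstar) D)
                \<le> 3 * norm21 (restrict_rows (row_support Bstar) D)"
    by simp
  show ?thesis
    unfolding Let_def D_def[symmetric]
    using cone norm2inf_le_of_cone_condition[OF cone] by blast
qed

end
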